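(* Let $N\geq 2$ and let $p(\theta)=a_0+\sum_{k=1}^{N}(a_k\cos k\theta+b_k\sin k\theta)$ be a real trigonometric polynomial of degree $N$ (so $a_N\neq 0$ or $b_N\neq 0$). Let $\gamma(\theta)=\big(p(\theta)\cos\theta-p'(\theta)\sin\theta,\ p(\theta)\sin\theta+p'(\theta)\cos\theta\big)$ for $\theta\in\,]-\pi,\pi[$, let $\mathcal{C}$ be the curve it describes, and let $\mathcal{P}(t)=\gamma(2\arctan t)$, $t\in\mathbb{R}$. Let $q$ be the number of times $\gamma$ traces $\mathcal{C}$, i.e. the positive integer such that for all but finitely many $t\in\mathbb{R}$ the set $\{s\in\mathbb{R}:\mathcal{P}(s)=\mathcal{P}(t)\}$ has exactly $q$ elements. (i) If some coefficient of even index is nonzero, i.e. $a_{2k}\neq 0$ for some integer $k$ with $0\le 2k\le N$, or $b_{2k}\neq 0$ for some integer $k$ with $2\le 2k\le N$, then $q=1$. (ii) If $a_{2k}=0$ and $b_{2k}=0$ for all integers $k$ with $0\leq 2k\leq N$ (with $b_0:=0$), then $q=2$.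
   Context: The map $\theta\mapsto\tan(\theta/2)$ is a bijection $]-\pi,\pi[\to\mathbb{R}$, so $\mathcal{P}$ is a rational parametrization of $\mathcal{C}$. *)

theory Defs
  imports "HOL-Analysis.Analysis"
begin

definition trig_poly :: "(nat \<Rightarrow> real) \<Rightarrow> (nat \<Rightarrow> real) \<Rightarrow> nat \<Rightarrow> real \<Rightarrow> real" where
  "trig_poly a b N \<theta> = a 0 + (\<Sum>k=1..N. a k * cos (real k * \<theta>) + b k * sin (real k * \<theta>))"

definition gamma_curve :: "(real \<Rightarrow> real) \<Rightarrow> real \<Rightarrow> real \<times> real" where
  "gamma_curve p \<theta> =
     (p \<theta> * cos \<theta> - deriv p \<theta> * sin \<theta>, p \<theta> * sin \<theta> + deriv p \<theta> * cos \<theta>)"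

definition ratpar :: "(real \<Rightarrow> real) \<Rightarrow> real \<Rightarrow> real \<times> real" where
  "ratpar p t = gamma_curve p (2 * arctan t)"

end

theory Submission
  imports Defs "HOL-Computational_Algebra.Polynomial"
begin

text \<open>The curve \<open>\<gamma>\<close> is the envelope of the lines \<open>x cos \<theta> + y sin \<theta> = p \<theta>\<close>. Its velocity is
  \<open>\<rho> \<theta> (- sin \<theta>, cos \<theta>)\<close> with \<open>\<rho> = p + p''\<close>, a nonzero trigonometric polynomial (its
  degree-\<open>N\<close> coefficients are \<open>1 - N\<^sup>2\<close> times those of \<open>p\<close>), and \<open>\<gamma> \<theta> = Y\<close> exactly when
  \<open>D\<^sub>Y = p - \<langle>Y, (cos, sin)\<rangle>\<close>, a solution of \<open>D'' + D = \<rho>\<close>, has a double zero at \<open>\<theta>\<close>.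
  Near any pair of parameters \<open>(\<theta>\<^sub>0, \<phi>\<^sub>0)\<close> this leaves only finitely many \<open>\<theta>\<close> with a second
  preimage: by continuity if \<open>\<gamma> \<theta>\<^sub>0 \<noteq> \<gamma> \<phi>\<^sub>0\<close>, by the mean value theorem if the tangents at
  \<open>\<theta>\<^sub>0\<close> and \<open>\<phi>\<^sub>0\<close> are transversal, by local injectivity if \<open>\<phi>\<^sub>0 - \<theta>\<^sub>0\<close> is a period of \<open>\<gamma>\<close>,
  and, for an antipodal pair \<open>\<phi>\<^sub>0 = \<theta>\<^sub>0 + \<pi>\<close>, by a sign argument for \<open>D'' + D = \<rho>\<close> as long as
  \<open>p \<theta> + p (\<theta> + \<pi>)\<close> does not vanish identically, i.e. as long as some even coefficient is
  nonzero. If all even coefficients vanish, \<open>p (\<theta> + \<pi>) = - p \<theta>\<close> and \<open>\<gamma>\<close> has period \<open>\<pi>\<close>.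
  Compactness of \<open>[-\<pi>, \<pi>]\<^sup>2\<close> and the substitution \<open>\<theta> = 2 arctan t\<close>, under which \<open>\<theta> + \<pi>\<close>
  corresponds to \<open>- 1 / t\<close>, then give the preimage counts 1 and 2.\<close>

section \<open>Trigonometric polynomials\<close>

text \<open>\<open>exp (i N \<theta>) p \<theta>\<close> is a polynomial of degree at most \<open>2N\<close> in \<open>exp (i \<theta>)\<close>.\<close>

definition trig_cpoly :: "(nat \<Rightarrow> real) \<Rightarrow> (nat \<Rightarrow> real) \<Rightarrow> nat \<Rightarrow> complex poly" where
  "trig_cpoly a b N = monom (of_real (a 0)) N +
     (\<Sum>k=1..N. monom ((of_real (a k) - \<i> * of_real (b k)) / 2) (N + k)
               + monom ((of_real (a k) + \<i> * of_real (b k)) / 2) (N - k))"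

lemma poly_trig_cpoly_cis:
  "poly (trig_cpoly a b N) (cis t) = cis (real N * t) * of_real (trig_poly a b N t)"
proof -
  have term_eq: "(of_real (a k) - \<i> * of_real (b k)) / 2 * cis t ^ (N + k)
      + (of_real (a k) + \<i> * of_real (b k)) / 2 * cis t ^ (N - k)
      = cis (real N * t) * of_real (a k * cos (real k * t) + b k * sin (real k * t))"
    if "k \<in> {1..N}" for k
  proof -
    have "cis t ^ (N + k) = cis (real (N + k) * t)" by (rule Complex.DeMoivre)
    also have "\<dots> = cis (real N * t) * cis (real k * t)" by (simp add: cis_mult algebra_simps)
    finally have high: "cis t ^ (N + k) = cis (real N * t) * cis (real k * t)" .
    have "cis t ^ (N - k) = cis (real (N - k) * t)" by (rule Complex.DeMoivre)
    also have "\<dots> = cis (real N * t) * cis (- (real k * t))"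
      using that by (simp add: cis_mult algebra_simps)
    finally have low: "cis t ^ (N - k) = cis (real N * t) * cis (- (real k * t))" .
    show ?thesis unfolding high low
      by (simp add: complex_eq_iff field_simps)
  qed
  have "poly (trig_cpoly a b N) (cis t) = of_real (a 0) * cis t ^ N +
     (\<Sum>k=1..N. (of_real (a k) - \<i> * of_real (b k)) / 2 * cis t ^ (N + k)
      + (of_real (a k) + \<i> * of_real (b k)) / 2 * cis t ^ (N - k))"
    unfolding trig_cpoly_def by (simp add: poly_sum poly_monom)
  also have "\<dots> = of_real (a 0) * cis (real N * t) +
     (\<Sum>k=1..N. cis (real N * t) * of_real (a k * cos (real k * t) + b k * sin (real k * t)))"
    by (subst sum.cong[OF refl term_eq]) (simp_all add: Complex.DeMoivre)
  also have "\<dots> = cis (real N * t) * of_real (trig_poly a b N t)"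
    unfolding trig_poly_def by (simp add: sum_distrib_left distrib_left mult.commute)
  finally show ?thesis .
qed

lemma trig_cpoly_nonzero:
  assumes "a 0 \<noteq> 0 \<or> (\<exists>k\<in>{1..N}. a k \<noteq> 0 \<or> b k \<noteq> 0)"
  shows "trig_cpoly a b N \<noteq> 0"
proof
  assume zero: "trig_cpoly a b N = 0"
  have "coeff (trig_cpoly a b N) N = of_real (a 0)"
    unfolding trig_cpoly_def by (auto simp: coeff_sum intro!: sum.neutral)
  then have "a 0 = 0" using zero by simp
  moreover have "a k = 0 \<and> b k = 0" if k: "k \<in> {1..N}" for k
  proof -
    let ?hi = "\<lambda>j. (of_real (a j) - \<i> * of_real (b j)) / 2"
      and ?lo = "\<lambda>j. (of_real (a j) + \<i> * of_real (b j)) / 2"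
    have "(\<Sum>j=1..N. coeff (monom (?hi j) (N + j)) (N + k) + coeff (monom (?lo j) (N - j)) (N + k))
        = (\<Sum>j=1..N. if j = k then ?hi j else 0)"
      using k by (intro sum.cong) auto
    then have "coeff (trig_cpoly a b N) (N + k) = ?hi k"
      using k unfolding trig_cpoly_def by (simp add: coeff_sum)
    then show ?thesis using zero by (simp add: complex_eq_iff)
  qed
  ultimately show False using assms by blast
qed

lemma inj_on_cis_ball: "inj_on cis (ball x pi)"
proof (rule inj_onI)
  fix s t assume s: "s \<in> ball x pi" and t: "t \<in> ball x pi" and "cis s = cis t"
  have "dist (\<i> * of_real x) (\<i> * of_real u) = dist x u" for u
    by (simp add: dist_norm norm_mult flip: right_diff_distrib of_real_diff)
  then have "exp (\<i> * of_real s) = exp (\<i> * of_real t)"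
    "\<i> * of_real s \<in> ball (\<i> * of_real x) pi" "\<i> * of_real t \<in> ball (\<i> * of_real x) pi"
    using s t \<open>cis s = cis t\<close> by (simp_all add: cis_conv_exp)
  then have "\<i> * of_real s = \<i> * (of_real t :: complex)"
    using inj_on_exp_pi[of "\<i> * of_real x"] by (auto dest: inj_onD)
  then show "s = t" by simp
qed

lemma trig_poly_zeros_isolated:
  assumes "a 0 \<noteq> 0 \<or> (\<exists>k\<in>{1..N}. a k \<noteq> 0 \<or> b k \<noteq> 0)"
  shows "\<exists>\<epsilon>>0. \<forall>t. t \<noteq> x \<and> \<bar>t - x\<bar> < \<epsilon> \<longrightarrow> trig_poly a b N t \<noteq> 0"
proof -
  let ?Z = "{t \<in> ball x pi. trig_poly a b N t = 0}"
  have "cis ` ?Z \<subseteq> {z. poly (trig_cpoly a b N) z = 0}"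
    by (auto simp: poly_trig_cpoly_cis)
  then have "finite (cis ` ?Z)"
    using poly_roots_finite[OF trig_cpoly_nonzero[OF assms]] finite_subset by blast
  then have "finite ?Z"
    by (rule finite_imageD) (rule inj_on_subset[OF inj_on_cis_ball], auto)
  then obtain d where d: "d > 0" "\<forall>t\<in>?Z. t \<noteq> x \<longrightarrow> d \<le> dist x t"
    using finite_set_avoid by blast
  show ?thesis
  proof (intro exI[of _ "min d pi"] conjI allI impI)
    fix t assume t: "t \<noteq> x \<and> \<bar>t - x\<bar> < min d pi"
    then have "t \<in> ball x pi" "\<not> d \<le> dist x t" by (auto simp: dist_real_def)
    then show "trig_poly a b N t \<noteq> 0" using d t by blast
  qed (use d in auto)
qed

lemma trig_poly_has_real_derivative:
  "(trig_poly a b N has_real_derivative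
     trig_poly (\<lambda>k. real k * b k) (\<lambda>k. - (real k * a k)) N t) (at t)"
  unfolding trig_poly_def[abs_def]
  by (auto intro!: derivative_eq_intros sum.cong simp: algebra_simps)

lemma continuous_on_trig_poly: "continuous_on S (trig_poly a b N)"
  by (rule continuous_at_imp_continuous_on) (blast intro: DERIV_isCont trig_poly_has_real_derivative)

lemma trig_poly_add:
  "trig_poly a b N t + trig_poly a' b' N t = trig_poly (\<lambda>k. a k + a' k) (\<lambda>k. b k + b' k) N t"
  unfolding trig_poly_def by (simp add: sum.distrib algebra_simps)

lemma trig_poly_shift_pi:
  "trig_poly a b N (t + pi) = trig_poly (\<lambda>k. (-1)^k * a k) (\<lambda>k. (-1)^k * b k) N t"
proof -
  have "real k * (t + pi) = real k * t + real k * pi" for k by (simp add: algebra_simps)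
  then show ?thesis unfolding trig_poly_def by (simp add: cos_add sin_add mult_ac)
qed

lemma trig_poly_periodic: "trig_poly a b N (t + 2 * pi) = trig_poly a b N t"
proof -
  have "trig_poly a b N (t + 2 * pi) = trig_poly a b N ((t + pi) + pi)"
    by (simp add: algebra_simps)
  then show ?thesis
    by (simp only: trig_poly_shift_pi) (simp flip: mult.assoc power_mult_distrib)
qed

lemma trig_poly_antiperiodic:
  assumes "\<And>k. k \<le> N \<Longrightarrow> even k \<Longrightarrow> a k = 0"
    and "\<And>k. 0 < k \<Longrightarrow> k \<le> N \<Longrightarrow> even k \<Longrightarrow> b k = 0"
  shows "trig_poly a b N (t + pi) = - trig_poly a b N t"
proof -
  have coeffs_zero: "a k + (-1)^k * a k = 0 \<and> b k + (-1)^k * b k = 0" if "0 < k" "k \<le> N" for k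
    using assms(1)[OF that(2)] assms(2)[OF that] by (cases "even k") simp_all
  have "trig_poly a b N t + trig_poly a b N (t + pi) =
      trig_poly (\<lambda>k. a k + (-1)^k * a k) (\<lambda>k. b k + (-1)^k * b k) N t"
    unfolding trig_poly_shift_pi trig_poly_add ..
  also have "\<dots> = 0"
    unfolding trig_poly_def using coeffs_zero assms(1)[of 0] by (simp add: sum.neutral)
  finally show ?thesis by linarith
qed

lemma trig_poly_plus_shift_pi_zeros_isolated:
  assumes "(\<exists>k. 2 * k \<le> N \<and> a (2 * k) \<noteq> 0) \<or> (\<exists>k. 2 \<le> 2 * k \<and> 2 * k \<le> N \<and> b (2 * k) \<noteq> 0)"
  shows "\<exists>\<epsilon>>0. \<forall>t. t \<noteq> x \<and> \<bar>t - x\<bar> < \<epsilon> \<longrightarrow> trig_poly a b N t + trig_poly a b N (t + pi) \<noteq> 0"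
proof -
  let ?a = "\<lambda>k. a k + (-1)^k * a k" and ?b = "\<lambda>k. b k + (-1)^k * b k"
  from assms obtain k where k: "2 * k \<le> N" "a (2 * k) \<noteq> 0 \<or> (0 < k \<and> b (2 * k) \<noteq> 0)"
    by auto
  then have nonzero: "?a 0 \<noteq> 0 \<or> (\<exists>k\<in>{1..N}. ?a k \<noteq> 0 \<or> ?b k \<noteq> 0)"
  proof (cases "k = 0")
    case False
    then have "2 * k \<in> {1..N}" using k by auto
    moreover have "?a (2 * k) = 2 * a (2 * k)" "?b (2 * k) = 2 * b (2 * k)" by simp_all
    ultimately show ?thesis using k False by (metis mult_eq_0_iff zero_neq_numeral)
  qed simp
  have "trig_poly a b N t + trig_poly a b N (t + pi) = trig_poly ?a ?b N t" for t
    by (simp only: trig_poly_shift_pi trig_poly_add)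
  then show ?thesis
    using trig_poly_zeros_isolated[OF nonzero, of x] by (simp only:)
qed

lemma DERIV_signed_less:
  fixes f :: "real \<Rightarrow> real"
  assumes f': "\<And>x. (f has_real_derivative f' x) (at x)" and "a < b"
    and pos: "\<And>x. a < x \<Longrightarrow> x < b \<Longrightarrow> \<sigma> * f' x > 0"
  shows "\<sigma> * f a < \<sigma> * f b"
proof (rule DERIV_pos_imp_increasing_open[where f = "\<lambda>x. \<sigma> * f x", OF \<open>a < b\<close>])
  show "\<exists>y. ((\<lambda>x. \<sigma> * f x) has_real_derivative y) (at x) \<and> 0 < y" if "a < x" "x < b" for x
    using DERIV_cmult[OF f'] pos that by blast
  show "continuous_on {a..b} (\<lambda>x. \<sigma> * f x)"
    using DERIV_cmult[OF f'] by (intro continuous_at_imp_continuous_on) (blast intro: DERIV_isCont)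
qed

lemma DERIV_signed_less_except:
  fixes f :: "real \<Rightarrow> real"
  assumes f': "\<And>x. (f has_real_derivative f' x) (at x)" and "a < b"
    and pos: "\<And>x. a < x \<Longrightarrow> x < b \<Longrightarrow> x \<noteq> c \<Longrightarrow> \<sigma> * f' x > 0"
  shows "\<sigma> * f a < \<sigma> * f b"
proof (cases "a < c \<and> c < b")
  case True
  have "\<sigma> * f a < \<sigma> * f c"
    by (rule DERIV_signed_less[OF f']) (use True pos in auto)
  also have "\<dots> < \<sigma> * f b"
    by (rule DERIV_signed_less[OF f']) (use True pos in auto)
  finally show ?thesis .
next
  case False
  then show ?thesis
    by (intro DERIV_signed_less[OF f' \<open>a < b\<close>]) (use pos in force)
qed

text \<open>A solution of \<open>f'' + f = r\<close> with a double zero at \<open>s\<close> takes the sign of \<open>r\<close> within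
  distance \<open>\<pi>/2\<close> of \<open>s\<close>: by variation of constants, \<open>f t = \<integral>\<^sub>s\<^sup>t r u sin (t - u) du\<close> and
  \<open>f' t = \<integral>\<^sub>s\<^sup>t r u cos (t - u) du\<close>.\<close>
lemma double_zero_sign:
  fixes f f' r :: "real \<Rightarrow> real"
  assumes f': "\<And>x. (f has_real_derivative f' x) (at x)"
    and f'': "\<And>x. (f' has_real_derivative r x - f x) (at x)"
    and zero: "f s = 0" "f' s = 0" and "s \<noteq> t" and near: "\<bar>t - s\<bar> < pi / 2"
    and pos: "\<And>u. u \<in> {min s t<..<max s t} \<Longrightarrow> \<sigma> * r u > 0"
  shows "\<sigma> * f t > 0 \<and> \<sigma> * ((t - s) * f' t) > 0"
proof -
  define H where "H u = f u * cos (t - u) + f' u * sin (t - u)" for u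
  define K where "K u = f' u * cos (t - u) - f u * sin (t - u)" for u
  have H': "(H has_real_derivative r u * sin (t - u)) (at u)" for u
    unfolding H_def by (auto intro!: derivative_eq_intros f' f'' simp: algebra_simps)
  have K': "(K has_real_derivative r u * cos (t - u)) (at u)" for u
    unfolding K_def by (auto intro!: derivative_eq_intros f' f'' simp: algebra_simps)
  have HK: "H s = 0" "K s = 0" "H t = f t" "K t = f' t"
    using zero by (simp_all add: H_def K_def)
  have cos_pos: "cos (t - u) > 0" if "u \<in> {min s t<..<max s t}" for u
  proof (rule cos_gt_zero_pi)
    show "- (pi / 2) < t - u" "t - u < pi / 2"
      using that near by (auto simp: abs_less_iff min_def max_def split: if_splits)
  qed
  show ?thesis
  proof (cases "s < t")
    case True
    have "\<sigma> * H s < \<sigma> * H t"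
    proof (rule DERIV_signed_less[OF H' True])
      fix u assume "s < u" "u < t"
      moreover have "sin (t - u) > 0" using \<open>u < t\<close> \<open>s < u\<close> near by (intro sin_gt_zero) auto
      ultimately show "\<sigma> * (r u * sin (t - u)) > 0"
        using pos[of u] True by (simp add: mult.assoc[symmetric])
    qed
    moreover have "\<sigma> * K s < \<sigma> * K t"
    proof (rule DERIV_signed_less[OF K' True])
      fix u assume "s < u" "u < t"
      then show "\<sigma> * (r u * cos (t - u)) > 0"
        using pos[of u] cos_pos[of u] True by (simp add: mult.assoc[symmetric])
    qed
    ultimately have "\<sigma> * f t > 0" "(t - s) * (\<sigma> * f' t) > 0" using HK True by simp_all
    then show ?thesis by (simp add: mult.left_commute)
  next
    case False
    then have "t < s" using \<open>s \<noteq> t\<close> by simp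
    have "- \<sigma> * H t < - \<sigma> * H s"
    proof (rule DERIV_signed_less[OF H' \<open>t < s\<close>])
      fix u assume "t < u" "u < s"
      moreover have "sin (t - u) < 0"
        using sin_gt_zero[of "u - t"] sin_minus[of "u - t"] \<open>t < u\<close> \<open>u < s\<close> near by auto
      ultimately show "- \<sigma> * (r u * sin (t - u)) > 0"
        using pos[of u] \<open>t < s\<close> by (simp add: mult.assoc[symmetric] mult_pos_neg)
    qed
    moreover have "\<sigma> * K t < \<sigma> * K s"
    proof (rule DERIV_signed_less[OF K' \<open>t < s\<close>])
      fix u assume "t < u" "u < s"
      then show "\<sigma> * (r u * cos (t - u)) > 0"
        using pos[of u] cos_pos[of u] \<open>t < s\<close> by (simp add: mult.assoc[symmetric])
    qed
    ultimately have "\<sigma> * f t > 0" "(t - s) * (\<sigma> * f' t) > 0"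
      using HK \<open>t < s\<close> by (simp_all add: mult_neg_neg)
    then show ?thesis by (simp add: mult.left_commute)
  qed
qed

lemma IVT_strict_between:
  fixes f :: "real \<Rightarrow> real"
  assumes cont: "continuous_on {min u v..max u v} f" and opposite: "f u * f v < 0"
  shows "\<exists>z \<in> {min u v<..<max u v}. f z = 0"
proof -
  have ordered: "\<exists>z \<in> {x<..<y}. f z = 0"
    if "x \<le> y" "continuous_on {x..y} f" "f x * f y < 0" for x y
  proof -
    have "\<exists>z. x \<le> z \<and> z \<le> y \<and> f z = 0"
    proof (cases "f x < 0")
      case True
      then have "f y > 0" using \<open>f x * f y < 0\<close> by (simp add: mult_less_0_iff)
      then show ?thesis using IVT'[of f x 0 y] True that by auto
    next
      case False
      then have "f x > 0" "f y < 0" using \<open>f x * f y < 0\<close> by (auto simp: mult_less_0_iff)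
      then show ?thesis using IVT2'[of f y 0 x] that by auto
    qed
    then obtain z where "x \<le> z" "z \<le> y" "f z = 0" by blast
    moreover have "z \<noteq> x" "z \<noteq> y" using \<open>f z = 0\<close> \<open>f x * f y < 0\<close> by auto
    ultimately show ?thesis by auto
  qed
  show ?thesis
  proof (cases "u \<le> v")
    case True
    then show ?thesis using ordered[of u v] assms by simp
  next
    case False
    then show ?thesis using ordered[of v u] assms by (simp add: mult.commute)
  qed
qed

lemma continuous_nonzero_sign:
  fixes f :: "real \<Rightarrow> real"
  assumes cont: "continuous_on {a<..<b} f" and nonzero: "\<And>x. a < x \<Longrightarrow> x < b \<Longrightarrow> f x \<noteq> 0"
  obtains \<sigma> where "\<sigma> = 1 \<or> \<sigma> = -1" "\<And>x. a < x \<Longrightarrow> x < b \<Longrightarrow> \<sigma> * f x > 0"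
proof (cases "\<exists>y. a < y \<and> y < b \<and> f y < 0")
  case False
  then show ?thesis using that[of 1] nonzero by force
next
  case True
  then obtain y where y: "a < y" "y < b" "f y < 0" by blast
  have "f x < 0" if x: "a < x" "x < b" for x
  proof (rule ccontr)
    assume "\<not> f x < 0"
    then have "f x * f y < 0" using nonzero[OF x] y by (simp add: mult_less_0_iff)
    moreover have "continuous_on {min x y..max x y} f"
      by (rule continuous_on_subset[OF cont]) (use x y in auto)
    ultimately obtain z where "z \<in> {min x y<..<max x y}" "f z = 0"
      using IVT_strict_between by blast
    then show False using nonzero x y by auto
  qed
  then show ?thesis using that[of "-1"] by force
qed

lemma punctured_nbhd_sign:
  fixes f :: "real \<Rightarrow> real"
  assumes cont: "continuous_on UNIV f"
    and nonzero: "\<And>t. t \<noteq> x \<Longrightarrow> \<bar>t - x\<bar> < \<epsilon> \<Longrightarrow> f t \<noteq> 0"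
  obtains \<sigma> where "\<And>t. \<sigma> t = 1 \<or> \<sigma> t = -1"
    "\<And>t u. \<bar>u - x\<bar> < \<epsilon> \<Longrightarrow> (t - x) * (u - x) > 0 \<Longrightarrow> \<sigma> t * f u > 0"
proof -
  have cont': "continuous_on {c<..<d} f" for c d using cont by (rule continuous_on_subset) auto
  obtain \<sigma>r where \<sigma>r: "\<sigma>r = 1 \<or> \<sigma>r = -1" "\<And>u. x < u \<Longrightarrow> u < x + \<epsilon> \<Longrightarrow> \<sigma>r * f u > 0"
    by (rule continuous_nonzero_sign[OF cont', of x "x + \<epsilon>"]) (use nonzero in force)+
  obtain \<sigma>l where \<sigma>l: "\<sigma>l = 1 \<or> \<sigma>l = -1" "\<And>u. x - \<epsilon> < u \<Longrightarrow> u < x \<Longrightarrow> \<sigma>l * f u > 0"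
    by (rule continuous_nonzero_sign[OF cont', of "x - \<epsilon>" x]) (use nonzero in force)+
  show ?thesis
  proof (rule that[of "\<lambda>t. if x < t then \<sigma>r else \<sigma>l"])
    fix t u assume "\<bar>u - x\<bar> < \<epsilon>" "(t - x) * (u - x) > 0"
    then show "(if x < t then \<sigma>r else \<sigma>l) * f u > 0"
      using \<sigma>r \<sigma>l by (auto simp: zero_less_mult_iff abs_less_iff)
  qed (use \<sigma>r \<sigma>l in auto)
qed

lemma cauchy_mvt_between:
  fixes f g :: "real \<Rightarrow> real"
  assumes f': "\<And>x. (f has_real_derivative f' x) (at x)"
    and g': "\<And>x. (g has_real_derivative g' x) (at x)" and "a \<noteq> b"
  shows "\<exists>c \<in> {min a b<..<max a b}. (f b - f a) * g' c = (g b - g a) * f' c"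
proof -
  have ordered: "\<exists>c \<in> {x<..<y}. (f y - f x) * g' c = (g y - g x) * f' c" if "x < y" for x y
  proof -
    from GMVT'[OF that, of f g g' f'] f' g' obtain c where
      "x < c" "c < y" "(f y - f x) * g' c = (g y - g x) * f' c"
      by (auto intro: DERIV_isCont)
    then show ?thesis by auto
  qed
  show ?thesis
  proof (cases "a < b")
    case True
    then show ?thesis using ordered[of a b] by simp
  next
    case False
    then have "b < a" using \<open>a \<noteq> b\<close> by simp
    then show ?thesis using ordered[of b a] by (force simp: algebra_simps)
  qed
qed

lemma abs_sin_diff_le: "\<bar>sin x - sin y\<bar> \<le> \<bar>x - y\<bar>" for x y :: real
proof -
  have "\<bar>sin x - sin y\<bar> = 2 * \<bar>sin ((x - y) / 2)\<bar> * \<bar>cos ((x + y) / 2)\<bar>"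
    by (simp add: sin_diff_sin abs_mult)
  also have "\<dots> \<le> 2 * (\<bar>x - y\<bar> / 2) * 1"
    using abs_sin_x_le_abs_x[of "(x - y) / 2"]
    by (intro mult_mono mult_left_mono) auto
  finally show ?thesis by simp
qed

lemma orthogonal_two_directions:
  fixes c1 c2 :: real
  assumes "c1 * cos a + c2 * sin a = 0" "c1 * cos b + c2 * sin b = 0" and "sin (b - a) \<noteq> 0"
  shows "c1 = 0 \<and> c2 = 0"
proof -
  have "c1 * sin (b - a) = sin b * (c1 * cos a + c2 * sin a) - sin a * (c1 * cos b + c2 * sin b)"
    and "c2 * sin (b - a) = cos a * (c1 * cos b + c2 * sin b) - cos b * (c1 * cos a + c2 * sin a)"
    by (simp_all add: sin_diff algebra_simps)
  then have "c1 * sin (b - a) = 0" "c2 * sin (b - a) = 0"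
    unfolding assms(1,2) by simp_all
  then show ?thesis using assms(3) by simp
qed

lemma double_zero_sign_same_side:
  fixes f f' r \<sigma> :: "real \<Rightarrow> real"
  assumes f': "\<And>x. (f has_real_derivative f' x) (at x)"
    and f'': "\<And>x. (f' has_real_derivative r x - f x) (at x)"
    and side: "\<And>v w. \<bar>w - x0\<bar> < \<epsilon> \<Longrightarrow> (v - x0) * (w - x0) > 0 \<Longrightarrow> \<sigma> v * r w > 0"
    and small: "\<epsilon> \<le> pi / 4"
    and zero: "f \<theta> = 0" "f' \<theta> = 0" and "\<theta> \<noteq> x0" "\<bar>\<theta> - x0\<bar> < \<epsilon>"
    and y: "y \<noteq> \<theta>" "\<bar>y - x0\<bar> < \<epsilon>" "(\<theta> - x0) * (y - x0) \<ge> 0"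
  shows "\<sigma> \<theta> * f y > 0 \<and> \<sigma> \<theta> * ((y - \<theta>) * f' y) > 0"
proof (rule double_zero_sign[OF f' f'' zero y(1)[symmetric]])
  show "\<bar>y - \<theta>\<bar> < pi / 2" using y(2) \<open>\<bar>\<theta> - x0\<bar> < \<epsilon>\<close> small by linarith
  show "\<sigma> \<theta> * r u > 0" if "u \<in> {min \<theta> y<..<max \<theta> y}" for u
  proof (rule side)
    show "\<bar>u - x0\<bar> < \<epsilon>" "(\<theta> - x0) * (u - x0) > 0"
      using that y \<open>\<theta> \<noteq> x0\<close> \<open>\<bar>\<theta> - x0\<bar> < \<epsilon>\<close>
      by (auto simp: zero_le_mult_iff zero_less_mult_iff abs_less_iff min_def max_def split: if_splits)
  qed
qed

text \<open>By \<open>double_zero_sign_same_side\<close>, \<open>\<theta>\<close> and \<open>\<psi>\<close> must lie on the same side of \<open>x\<^sub>0\<close> (compare the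
  signs of \<open>f\<close>, \<open>f'\<close>, \<open>g\<close>, \<open>g'\<close> at \<open>x\<^sub>0\<close>); then \<open>f + g\<close> equals \<open>g\<close> at \<open>\<theta>\<close> and \<open>f\<close> at
  \<open>\<psi>\<close>, which have opposite signs, so \<open>f + g\<close> vanishes between them.\<close>
lemma double_zeros_of_summands:
  fixes f f' g g' r s :: "real \<Rightarrow> real"
  assumes f': "\<And>x. (f has_real_derivative f' x) (at x)"
    and f'': "\<And>x. (f' has_real_derivative r x - f x) (at x)"
    and g': "\<And>x. (g has_real_derivative g' x) (at x)"
    and g'': "\<And>x. (g' has_real_derivative s x - g x) (at x)"
    and cont: "continuous_on UNIV r" "continuous_on UNIV s"
    and sum_zero: "f x0 + g x0 = 0" "f' x0 + g' x0 = 0"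
    and nonzero: "\<And>t. t \<noteq> x0 \<Longrightarrow> \<bar>t - x0\<bar> < \<epsilon> \<Longrightarrow> r t \<noteq> 0 \<and> s t \<noteq> 0 \<and> f t + g t \<noteq> 0"
    and small: "\<epsilon> \<le> pi / 4"
    and f_zero: "f \<theta> = 0" "f' \<theta> = 0" and g_zero: "g \<psi> = 0" "g' \<psi> = 0"
    and near: "\<bar>\<theta> - x0\<bar> < \<epsilon>" "\<bar>\<psi> - x0\<bar> < \<epsilon>"
  shows "\<theta> = x0"
proof (rule ccontr)
  assume "\<theta> \<noteq> x0"
  have "\<epsilon> > 0" using near by linarith
  obtain \<sigma> where \<sigma>: "\<And>t. \<sigma> t = 1 \<or> \<sigma> t = -1"
    "\<And>t u. \<bar>u - x0\<bar> < \<epsilon> \<Longrightarrow> (t - x0) * (u - x0) > 0 \<Longrightarrow> \<sigma> t * r u > 0"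
    using punctured_nbhd_sign[OF cont(1)] nonzero by blast
  obtain \<tau> where \<tau>: "\<And>t. \<tau> t = 1 \<or> \<tau> t = -1"
    "\<And>t u. \<bar>u - x0\<bar> < \<epsilon> \<Longrightarrow> (t - x0) * (u - x0) > 0 \<Longrightarrow> \<tau> t * s u > 0"
    using punctured_nbhd_sign[OF cont(2)] nonzero by blast
  note F = double_zero_sign_same_side[where \<sigma> = \<sigma>, OF f' f'' \<sigma>(2) small f_zero \<open>\<theta> \<noteq> x0\<close> near(1)]
  have "\<psi> \<noteq> x0"
  proof
    assume "\<psi> = x0"
    then have "f x0 = 0" using sum_zero g_zero by simp
    then show False using F[where y = x0] \<open>\<theta> \<noteq> x0\<close> \<open>\<epsilon> > 0\<close> by simp
  qed
  note G = double_zero_sign_same_side[where \<sigma> = \<tau>, OF g' g'' \<tau>(2) small g_zero \<open>\<psi> \<noteq> x0\<close> near(2)]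
  have at_x0: "\<sigma> \<theta> * f x0 > 0" "\<sigma> \<theta> * ((x0 - \<theta>) * f' x0) > 0"
      "\<tau> \<psi> * g x0 > 0" "\<tau> \<psi> * ((x0 - \<psi>) * g' x0) > 0"
    using F[where y = x0] G[where y = x0] \<open>\<theta> \<noteq> x0\<close> \<open>\<psi> \<noteq> x0\<close> \<open>\<epsilon> > 0\<close> by auto
  then have "\<tau> \<psi> = - \<sigma> \<theta>"
    using sum_zero(1) \<sigma>(1)[of \<theta>] \<tau>(1)[of \<psi>] by (auto simp: eq_neg_iff_add_eq_0[symmetric])
  then have "(x0 - \<theta>) * (\<sigma> \<theta> * f' x0) > 0" "(x0 - \<psi>) * (\<sigma> \<theta> * f' x0) > 0"
    using at_x0 sum_zero(2) by (simp_all add: eq_neg_iff_add_eq_0[symmetric] algebra_simps)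
  moreover have "0 < a * b" if "0 < a * w" "0 < b * w" for a b w :: real
    using that by (auto simp: zero_less_mult_iff)
  ultimately have same_side: "(\<theta> - x0) * (\<psi> - x0) > 0"
    by (metis minus_diff_eq mult_minus_left mult_minus_right)
  have "\<theta> \<noteq> \<psi>" using nonzero[of \<theta>] near f_zero g_zero \<open>\<theta> \<noteq> x0\<close> by auto
  then have "\<sigma> \<theta> * (f \<psi> + g \<psi>) > 0" "\<sigma> \<theta> * (f \<theta> + g \<theta>) < 0"
    using F[where y = \<psi>] G[where y = \<theta>] \<open>\<tau> \<psi> = - \<sigma> \<theta>\<close> f_zero g_zero same_side near
    by (auto simp: mult.commute)
  then have "(f \<theta> + g \<theta>) * (f \<psi> + g \<psi>) < 0"
    using \<sigma>(1)[of \<theta>] by (auto simp: mult_less_0_iff zero_less_mult_iff)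
  moreover have "continuous_on {min \<theta> \<psi>..max \<theta> \<psi>} (\<lambda>t. f t + g t)"
    using f' g' by (intro continuous_at_imp_continuous_on ballI continuous_intros)
      (blast intro: DERIV_isCont)+
  ultimately obtain z where "z \<in> {min \<theta> \<psi><..<max \<theta> \<psi>}" "f z + g z = 0"
    using IVT_strict_between[of \<theta> \<psi> "\<lambda>t. f t + g t"] by blast
  then show False
    using nonzero[of z] near same_side
    by (auto simp: zero_less_mult_iff abs_less_iff min_def max_def split: if_splits)
qed

lemma continuous_separates_near:
  fixes f :: "real \<Rightarrow> 'a::metric_space"
  assumes cont: "continuous_on UNIV f" and "f x \<noteq> f y"
  shows "\<exists>\<epsilon>>0. \<forall>s t. \<bar>s - x\<bar> < \<epsilon> \<longrightarrow> \<bar>t - y\<bar> < \<epsilon> \<longrightarrow> f s \<noteq> f t"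
proof -
  define r where "r = dist (f x) (f y) / 2"
  have "r > 0" using \<open>f x \<noteq> f y\<close> by (simp add: r_def)
  have "isCont f z" for z using cont by (simp add: continuous_on_eq_continuous_at)
  then obtain dx dy where "dx > 0" "\<And>s. dist s x < dx \<Longrightarrow> dist (f s) (f x) < r"
    and "dy > 0" "\<And>t. dist t y < dy \<Longrightarrow> dist (f t) (f y) < r"
    using \<open>r > 0\<close> unfolding continuous_at_eps_delta by meson
  moreover have "f s \<noteq> f t" if "dist (f s) (f x) < r" "dist (f t) (f y) < r" for s t
    using that dist_triangle[of "f x" "f y" "f s"] by (auto simp: r_def dist_commute)
  ultimately show ?thesis
    by (intro exI[of _ "min dx dy"]) (auto simp: dist_real_def)
qed

lemma sin_diff_eq_0_cases:
  assumes "sin (y - x) = 0" "x \<in> {-pi..pi}" "y \<in> {-pi..pi}"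
  shows "y - x \<in> {0, pi, -pi, 2 * pi, -2 * pi}"
proof -
  obtain i :: int where i: "y - x = of_int i * pi" using sin_zero_iff_int2 assms(1) by blast
  have "of_int i * pi \<le> 2 * pi" "(-2) * pi \<le> of_int i * pi" using assms(2,3) unfolding i[symmetric] by auto
  then have "real_of_int i \<le> 2" "-2 \<le> real_of_int i" by (simp_all only: mult_le_cancel_right pi_gt_zero)
  then have "i \<in> {-2, -1, 0, 1, 2}" by auto
  then show ?thesis using i by auto
qed

lemma finite_if_locally_determined:
  fixes R :: "real \<Rightarrow> real \<Rightarrow> bool"
  assumes "compact K" and in_K: "\<And>\<theta> \<phi>. R \<theta> \<phi> \<Longrightarrow> (\<theta>, \<phi>) \<in> K"
    and local: "\<And>z. z \<in> K \<Longrightarrow> \<exists>\<epsilon>>0. \<forall>\<theta> \<phi>. \<bar>\<theta> - fst z\<bar> < \<epsilon> \<longrightarrow> \<bar>\<phi> - snd z\<bar> < \<epsilon> \<longrightarrow> R \<theta> \<phi> \<longrightarrow> \<theta> = fst z"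
  shows "finite {\<theta>. \<exists>\<phi>. R \<theta> \<phi>}"
proof -
  obtain E where E: "\<And>z. z \<in> K \<Longrightarrow> E z > 0"
    "\<And>z \<theta> \<phi>. z \<in> K \<Longrightarrow> \<bar>\<theta> - fst z\<bar> < E z \<Longrightarrow> \<bar>\<phi> - snd z\<bar> < E z \<Longrightarrow> R \<theta> \<phi> \<Longrightarrow> \<theta> = fst z"
    using local by metis
  define U where "U z = ball (fst z) (E z) \<times> ball (snd z) (E z)" for z
  have "K \<subseteq> (\<Union>z\<in>K. U z)"
    using E(1) by (force simp: U_def mem_Times_iff)
  then obtain C where C: "C \<subseteq> K" "finite C" "K \<subseteq> (\<Union>z\<in>C. U z)"
    using compactE_image[OF \<open>compact K\<close>, of K U] by (auto simp: U_def intro!: open_Times)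
  have "{\<theta>. \<exists>\<phi>. R \<theta> \<phi>} \<subseteq> fst ` C"
  proof
    fix \<theta> assume "\<theta> \<in> {\<theta>. \<exists>\<phi>. R \<theta> \<phi>}"
    then obtain \<phi> where "R \<theta> \<phi>" by blast
    then obtain z where z: "z \<in> C" "(\<theta>, \<phi>) \<in> U z" using C(3) in_K by blast
    then have "\<theta> = fst z"
      using E(2)[of z \<theta> \<phi>] C(1) \<open>R \<theta> \<phi>\<close> by (auto simp: U_def dist_real_def abs_minus_commute)
    then show "\<theta> \<in> fst ` C" using z(1) by blast
  qed
  then show ?thesis using C(2) finite_subset by blast
qed

section \<open>The substitution \<open>\<theta> = 2 arctan t\<close>\<close>

lemma two_arctan_bounds: "2 * arctan t \<in> {-pi<..<pi}"
  using arctan_bounded[of t] by auto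

lemma inj_two_arctan: "inj (\<lambda>t::real. 2 * arctan t)"
  by (rule injI) (simp add: arctan_eq_iff)

lemma two_arctan_neg_inverse: "t \<noteq> 0 \<Longrightarrow> 2 * arctan (- 1 / t) = 2 * arctan t - sgn t * pi"
  using Transcendental.arctan_inverse[of t] by (simp add: arctan_minus algebra_simps)

lemma two_arctan_antipodal_iff:
  "\<bar>2 * arctan s - 2 * arctan t\<bar> = pi \<longleftrightarrow> t \<noteq> 0 \<and> s = - 1 / t"
proof
  assume antipodal: "\<bar>2 * arctan s - 2 * arctan t\<bar> = pi"
  have "t \<noteq> 0" using antipodal two_arctan_bounds[of s] by auto
  have "2 * arctan s = 2 * arctan t - sgn t * pi"
  proof (cases "t > 0")
    case True
    then have "arctan t > 0" by simp
    then show ?thesis using True antipodal two_arctan_bounds[of s]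
      by (auto simp del: zero_less_arctan_iff simp: abs_if split: if_splits)
  next
    case False
    then have "arctan t < 0" using \<open>t \<noteq> 0\<close> by simp
    then show ?thesis using False \<open>t \<noteq> 0\<close> antipodal two_arctan_bounds[of s]
      by (auto simp del: arctan_less_zero_iff simp: abs_if split: if_splits)
  qed
  then have "arctan s = arctan (- 1 / t)" using two_arctan_neg_inverse[OF \<open>t \<noteq> 0\<close>] by simp
  then show "t \<noteq> 0 \<and> s = - 1 / t" using \<open>t \<noteq> 0\<close> by (simp add: arctan_eq_iff)
next
  assume "t \<noteq> 0 \<and> s = - 1 / t"
  then show "\<bar>2 * arctan s - 2 * arctan t\<bar> = pi"
    using two_arctan_neg_inverse[of t] by (auto simp: sgn_if)
qed

section \<open>The hedgehog with support function \<open>p\<close>\<close>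

locale hedgehog =
  fixes a b :: "nat \<Rightarrow> real" and N :: nat
  assumes degree_ge_2: "N \<ge> 2" and leading_nonzero: "a N \<noteq> 0 \<or> b N \<noteq> 0"
begin

abbreviation p :: "real \<Rightarrow> real" where "p \<equiv> trig_poly a b N"

definition p' :: "real \<Rightarrow> real" where
  "p' = trig_poly (\<lambda>k. real k * b k) (\<lambda>k. - (real k * a k)) N"

definition p'' :: "real \<Rightarrow> real" where
  "p'' = trig_poly (\<lambda>k. real k * - (real k * a k)) (\<lambda>k. - (real k * (real k * b k))) N"

definition radius :: "real \<Rightarrow> real" where "radius t = p t + p'' t"

definition gx :: "real \<Rightarrow> real" where "gx t = p t * cos t - p' t * sin t"
definition gy :: "real \<Rightarrow> real" where "gy t = p t * sin t + p' t * cos t"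
definition gam :: "real \<Rightarrow> real \<times> real" where "gam t = (gx t, gy t)"

text \<open>\<open>fst Y * cos t + snd Y * sin t\<close> is the support function of the single point \<open>Y\<close>.\<close>
definition support_gap :: "real \<times> real \<Rightarrow> real \<Rightarrow> real" where
  "support_gap Y t = p t - (fst Y * cos t + snd Y * sin t)"

definition support_gap' :: "real \<times> real \<Rightarrow> real \<Rightarrow> real" where
  "support_gap' Y t = p' t + fst Y * sin t - snd Y * cos t"

lemma p_deriv: "(p has_real_derivative p' t) (at t)"
  unfolding p'_def by (rule trig_poly_has_real_derivative)

lemma p'_deriv: "(p' has_real_derivative p'' t) (at t)"
  unfolding p'_def p''_def by (rule trig_poly_has_real_derivative)

lemma gamma_curve_eq: "gamma_curve p = gam"
  using DERIV_imp_deriv[OF p_deriv]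
  by (auto simp: gamma_curve_def gam_def gx_def gy_def)

lemma gx_deriv: "(gx has_real_derivative - (radius t * sin t)) (at t)"
  unfolding gx_def[abs_def]
  by (auto intro!: derivative_eq_intros p_deriv p'_deriv simp: radius_def algebra_simps)

lemma gy_deriv: "(gy has_real_derivative radius t * cos t) (at t)"
  unfolding gy_def[abs_def]
  by (auto intro!: derivative_eq_intros p_deriv p'_deriv simp: radius_def algebra_simps)

lemma continuous_on_gam: "continuous_on S gam"
  unfolding gam_def[abs_def] using gx_deriv gy_deriv
  by (intro continuous_on_Pair continuous_at_imp_continuous_on ballI) (blast intro: DERIV_isCont)+

lemma support_gap_deriv: "(support_gap Y has_real_derivative support_gap' Y t) (at t)"
  unfolding support_gap_def[abs_def] support_gap'_def
  by (auto intro!: derivative_eq_intros p_deriv simp: algebra_simps)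

lemma support_gap'_deriv: "(support_gap' Y has_real_derivative radius t - support_gap Y t) (at t)"
  unfolding support_gap'_def[abs_def] support_gap_def
  by (auto intro!: derivative_eq_intros p'_deriv simp: radius_def algebra_simps)

lemma continuous_on_radius: "continuous_on S radius"
  unfolding radius_def[abs_def] p''_def by (intro continuous_on_add continuous_on_trig_poly)

lemma radius_zeros_isolated: "\<exists>\<epsilon>>0. \<forall>t. t \<noteq> x \<and> \<bar>t - x\<bar> < \<epsilon> \<longrightarrow> radius t \<noteq> 0"
proof -
  have "real N * real N \<ge> 2 * 2" using degree_ge_2 by (intro mult_mono) auto
  then have "a N + real N * - (real N * a N) \<noteq> 0 \<or> b N + - (real N * (real N * b N)) \<noteq> 0"
    using leading_nonzero by (auto simp: algebra_simps)
  then have "\<exists>k\<in>{1..N}. a k + real k * - (real k * a k) \<noteq> 0 \<or> b k + - (real k * (real k * b k)) \<noteq> 0"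
    using degree_ge_2 by (intro bexI[of _ N]) auto
  from trig_poly_zeros_isolated[OF disjI2[OF this], of x] show ?thesis
    by (simp add: radius_def p''_def trig_poly_add)
qed

lemma gam_periodic: "gam (t + 2 * pi) = gam t"
proof -
  have "p' (t + 2 * pi) = p' t" by (simp add: p'_def trig_poly_periodic)
  then show ?thesis by (simp add: gam_def gx_def gy_def trig_poly_periodic)
qed

lemma gam_eq_iff_double_zero: "gam t = Y \<longleftrightarrow> support_gap Y t = 0 \<and> support_gap' Y t = 0"
proof -
  have unit: "cos t * cos t + sin t * sin t = 1" by (rule sin_cos_squared_add3)
  have gx_gy: "gx t * cos t + gy t * sin t = p t" "gy t * cos t - gx t * sin t = p' t"
    using unit unfolding gx_def gy_def by algebra+
  show ?thesis
  proof
    assume "gam t = Y"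
    then show "support_gap Y t = 0 \<and> support_gap' Y t = 0"
      using gx_gy by (auto simp: gam_def support_gap_def support_gap'_def)
  next
    assume "support_gap Y t = 0 \<and> support_gap' Y t = 0"
    then have "p t = fst Y * cos t + snd Y * sin t" "p' t = snd Y * cos t - fst Y * sin t"
      by (auto simp: support_gap_def support_gap'_def)
    then have "gx t = fst Y" "gy t = snd Y"
      using unit unfolding gx_def gy_def by algebra+
    then show "gam t = Y" by (simp add: gam_def)
  qed
qed


definition proj :: "real \<Rightarrow> real \<Rightarrow> real" where
  "proj c t = gx t * cos c + gy t * sin c"

definition proj_perp :: "real \<Rightarrow> real \<Rightarrow> real" where
  "proj_perp c t = gy t * cos c - gx t * sin c"

lemma proj_deriv: "(proj c has_real_derivative - (radius t * sin (t - c))) (at t)"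
  unfolding proj_def[abs_def]
  by (auto intro!: derivative_eq_intros gx_deriv gy_deriv simp: sin_diff algebra_simps)

lemma proj_perp_deriv: "(proj_perp c has_real_derivative radius t * cos (t - c)) (at t)"
  unfolding proj_perp_def[abs_def]
  by (auto intro!: derivative_eq_intros gx_deriv gy_deriv simp: cos_diff algebra_simps)

text \<open>If the radius of curvature keeps its sign across \<open>x\<^sub>0\<close>, the component of \<open>gam\<close> along the
  normal at \<open>x\<^sub>0\<close> is strictly monotone near \<open>x\<^sub>0\<close>; if it changes sign (a cusp), the component
  along the tangent is.\<close>
lemma gam_separated_near:
  assumes nonzero: "\<And>t. t \<noteq> x0 \<Longrightarrow> \<bar>t - x0\<bar> < \<epsilon> \<Longrightarrow> radius t \<noteq> 0"
    and small: "\<epsilon> \<le> pi / 4" and "x0 - \<epsilon> < \<theta>" "\<theta> < \<phi>" "\<phi> < x0 + \<epsilon>"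
  shows "gam \<theta> \<noteq> gam \<phi>"
proof -
  obtain \<sigma>l where \<sigma>l: "\<sigma>l = 1 \<or> \<sigma>l = -1" "\<And>x. x0 - \<epsilon> < x \<Longrightarrow> x < x0 \<Longrightarrow> \<sigma>l * radius x > 0"
    by (rule continuous_nonzero_sign[OF continuous_on_radius, of "x0 - \<epsilon>" x0])
      (use nonzero in force)+
  obtain \<sigma>r where \<sigma>r: "\<sigma>r = 1 \<or> \<sigma>r = -1" "\<And>x. x0 < x \<Longrightarrow> x < x0 + \<epsilon> \<Longrightarrow> \<sigma>r * radius x > 0"
    by (rule continuous_nonzero_sign[OF continuous_on_radius, of x0 "x0 + \<epsilon>"])
      (use nonzero in force)+
  have trig_signs: "cos (x - x0) > 0" "x < x0 \<Longrightarrow> sin (x - x0) < 0" "x0 < x \<Longrightarrow> sin (x - x0) > 0"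
    if "\<theta> < x" "x < \<phi>" for x
  proof -
    have "- (pi / 4) < x - x0" "x - x0 < pi / 4" using that assms by linarith+
    then show "cos (x - x0) > 0" "x < x0 \<Longrightarrow> sin (x - x0) < 0" "x0 < x \<Longrightarrow> sin (x - x0) > 0"
      using sin_gt_zero[of "x0 - x"] sin_gt_zero[of "x - x0"] sin_minus[of "x0 - x"]
      by (auto intro!: cos_gt_zero_pi)
  qed
  show ?thesis
  proof (cases "\<sigma>r = \<sigma>l")
    case True
    have "\<sigma>l * proj_perp x0 \<theta> < \<sigma>l * proj_perp x0 \<phi>"
    proof (rule DERIV_signed_less_except[OF proj_perp_deriv \<open>\<theta> < \<phi>\<close>, where c = x0])
      fix x assume "\<theta> < x" "x < \<phi>" "x \<noteq> x0"
      then have "\<sigma>l * radius x > 0"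
        using \<sigma>l(2)[of x] \<sigma>r(2)[of x] True assms by (cases "x < x0") auto
      then show "\<sigma>l * (radius x * cos (x - x0)) > 0"
        using trig_signs(1)[OF \<open>\<theta> < x\<close> \<open>x < \<phi>\<close>] by (simp add: mult.assoc[symmetric])
    qed
    then show ?thesis by (auto simp: gam_def proj_perp_def)
  next
    case False
    then have "\<sigma>r = - \<sigma>l" using \<sigma>l(1) \<sigma>r(1) by auto
    have "\<sigma>l * proj x0 \<theta> < \<sigma>l * proj x0 \<phi>"
    proof (rule DERIV_signed_less_except[OF proj_deriv \<open>\<theta> < \<phi>\<close>, where c = x0])
      fix x assume x: "\<theta> < x" "x < \<phi>" "x \<noteq> x0"
      show "\<sigma>l * - (radius x * sin (x - x0)) > 0"
      proof (cases "x < x0")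
        case True
        then have "\<sigma>l * radius x > 0" "- sin (x - x0) > 0"
          using \<sigma>l(2) trig_signs(2)[OF x(1,2)] x assms by auto
        then show ?thesis by (simp add: mult_pos_neg mult.assoc[symmetric])
      next
        case False
        then have "\<sigma>r * radius x > 0" "sin (x - x0) > 0"
          using \<sigma>r(2) trig_signs(3)[OF x(1,2)] x assms by auto
        then show ?thesis using \<open>\<sigma>r = - \<sigma>l\<close> by (simp add: mult_neg_pos mult.assoc[symmetric])
      qed
    qed
    then show ?thesis by (auto simp: gam_def proj_def)
  qed
qed

lemma gam_locally_injective: "\<exists>\<epsilon>>0. inj_on gam {x0 - \<epsilon><..<x0 + \<epsilon>}"
proof -
  obtain e0 where e0: "e0 > 0" "\<forall>t. t \<noteq> x0 \<and> \<bar>t - x0\<bar> < e0 \<longrightarrow> radius t \<noteq> 0"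
    using radius_zeros_isolated[of x0] by blast
  define \<epsilon> where "\<epsilon> = min e0 (pi / 4)"
  have "\<epsilon> > 0" "\<epsilon> \<le> pi / 4" using e0 by (simp_all add: \<epsilon>_def)
  have separated: "gam \<theta> \<noteq> gam \<phi>" if "x0 - \<epsilon> < \<theta>" "\<theta> < \<phi>" "\<phi> < x0 + \<epsilon>" for \<theta> \<phi>
    using gam_separated_near[OF _ \<open>\<epsilon> \<le> pi / 4\<close> that] e0 by (simp add: \<epsilon>_def)
  show ?thesis
  proof (intro exI[of _ \<epsilon>] conjI \<open>\<epsilon> > 0\<close> inj_onI)
    fix \<theta> \<phi> assume "\<theta> \<in> {x0 - \<epsilon><..<x0 + \<epsilon>}" "\<phi> \<in> {x0 - \<epsilon><..<x0 + \<epsilon>}" "gam \<theta> = gam \<phi>"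
    then show "\<theta> = \<phi>"
      using separated[of \<theta> \<phi>] separated[of \<phi> \<theta>] by (cases \<theta> \<phi> rule: linorder_cases) auto
  qed
qed

lemma chord_direction:
  assumes "x \<noteq> y" and nonzero: "\<And>t. t \<in> {min x y<..<max x y} \<Longrightarrow> radius t \<noteq> 0"
  shows "\<exists>c \<in> {min x y<..<max x y}. (gx y - gx x) * cos c + (gy y - gy x) * sin c = 0"
proof -
  obtain c where c: "c \<in> {min x y<..<max x y}"
    "(gx y - gx x) * (radius c * cos c) = (gy y - gy x) * - (radius c * sin c)"
    using cauchy_mvt_between[OF gx_deriv gy_deriv \<open>x \<noteq> y\<close>] by blast
  then have "radius c * ((gx y - gx x) * cos c + (gy y - gy x) * sin c) = 0"
    by (simp add: algebra_simps)
  then show ?thesis using c(1) nonzero[OF c(1)] by auto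
qed

text \<open>By the mean value theorem, a chord joining \<open>gam \<theta>\<close> to \<open>gam \<phi>\<close> is orthogonal to a tangent
  direction near \<open>x\<^sub>0\<close> and to one near \<open>\<phi>\<^sub>0\<close>; these directions are not parallel, so the chord
  is degenerate.\<close>
lemma transversal_coincidence_isolated:
  assumes "gam x0 = gam \<phi>0" and "sin (\<phi>0 - x0) \<noteq> 0"
  shows "\<exists>\<epsilon>>0. \<forall>\<theta> \<phi>. \<bar>\<theta> - x0\<bar> < \<epsilon> \<longrightarrow> \<bar>\<phi> - \<phi>0\<bar> < \<epsilon> \<longrightarrow> gam \<theta> = gam \<phi> \<longrightarrow> \<theta> = x0"
proof -
  obtain e1 where e1: "e1 > 0" "inj_on gam {x0 - e1<..<x0 + e1}"
    using gam_locally_injective by blast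
  obtain e2 where e2: "e2 > 0" "\<forall>t. t \<noteq> x0 \<and> \<bar>t - x0\<bar> < e2 \<longrightarrow> radius t \<noteq> 0"
    using radius_zeros_isolated by blast
  obtain e3 where e3: "e3 > 0" "\<forall>t. t \<noteq> \<phi>0 \<and> \<bar>t - \<phi>0\<bar> < e3 \<longrightarrow> radius t \<noteq> 0"
    using radius_zeros_isolated by blast
  define \<epsilon> where "\<epsilon> = min (min e1 e2) (min e3 (\<bar>sin (\<phi>0 - x0)\<bar> / 2))"
  have \<epsilon>: "\<epsilon> > 0" "\<epsilon> \<le> e1" "\<epsilon> \<le> e2" "\<epsilon> \<le> e3" "2 * \<epsilon> \<le> \<bar>sin (\<phi>0 - x0)\<bar>"
    using e1 e2 e3 assms(2) by (auto simp: \<epsilon>_def)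
  show ?thesis
  proof (intro exI[of _ \<epsilon>] conjI \<epsilon>(1) allI impI)
    fix \<theta> \<phi> assume near: "\<bar>\<theta> - x0\<bar> < \<epsilon>" "\<bar>\<phi> - \<phi>0\<bar> < \<epsilon>" and "gam \<theta> = gam \<phi>"
    show "\<theta> = x0"
    proof (rule ccontr)
      assume "\<theta> \<noteq> x0"
      then have "gam \<theta> \<noteq> gam x0"
        using inj_onD[OF e1(2), of \<theta> x0] near \<epsilon> e1 by (auto simp: abs_less_iff)
      then have "\<phi> \<noteq> \<phi>0" using \<open>gam \<theta> = gam \<phi>\<close> assms(1) by auto
      define c1 c2 where "c1 = gx \<theta> - gx x0" and "c2 = gy \<theta> - gy x0"
      have c': "gx \<phi> - gx \<phi>0 = c1" "gy \<phi> - gy \<phi>0 = c2"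
        using \<open>gam \<theta> = gam \<phi>\<close> assms(1) by (auto simp: c1_def c2_def gam_def)
      have "\<exists>s \<in> {min x0 \<theta><..<max x0 \<theta>}. c1 * cos s + c2 * sin s = 0"
        unfolding c1_def c2_def
      proof (rule chord_direction)
        fix t assume "t \<in> {min x0 \<theta><..<max x0 \<theta>}"
        then show "radius t \<noteq> 0"
          using e2(2)[rule_format, of t] near \<epsilon> by (auto simp: min_def max_def split: if_splits)
      qed (use \<open>\<theta> \<noteq> x0\<close> in simp)
      then obtain s where s: "s \<in> {min x0 \<theta><..<max x0 \<theta>}" "c1 * cos s + c2 * sin s = 0"
        by blast
      have "\<exists>u \<in> {min \<phi>0 \<phi><..<max \<phi>0 \<phi>}. c1 * cos u + c2 * sin u = 0"
        unfolding c'[symmetric]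
      proof (rule chord_direction)
        fix t assume "t \<in> {min \<phi>0 \<phi><..<max \<phi>0 \<phi>}"
        then show "radius t \<noteq> 0"
          using e3(2)[rule_format, of t] near \<epsilon> by (auto simp: min_def max_def split: if_splits)
      qed (use \<open>\<phi> \<noteq> \<phi>0\<close> in simp)
      then obtain u where u: "u \<in> {min \<phi>0 \<phi><..<max \<phi>0 \<phi>}" "c1 * cos u + c2 * sin u = 0"
        by blast
      have "\<bar>(u - s) - (\<phi>0 - x0)\<bar> < 2 * \<epsilon>" using s(1) u(1) near by auto
      then have "sin (u - s) \<noteq> 0"
        using abs_sin_diff_le[of "u - s" "\<phi>0 - x0"] \<epsilon>(5) by linarith
      then have "c1 = 0 \<and> c2 = 0" using orthogonal_two_directions[OF s(2) u(2)] by blast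
      with \<open>gam \<theta> \<noteq> gam x0\<close> show False by (simp add: c1_def c2_def gam_def)
    qed
  qed
qed

lemma support_gap_antipodal:
  "support_gap Y t + support_gap Y (t + pi) = p t + p (t + pi)"
  "support_gap' Y t + support_gap' Y (t + pi) = p' t + p' (t + pi)"
  by (simp_all add: support_gap_def support_gap'_def algebra_simps)

lemma antipodal_coincidence_isolated:
  assumes "gam x0 = gam (x0 + pi)"
    and "\<exists>e>0. \<forall>t. t \<noteq> x0 \<and> \<bar>t - x0\<bar> < e \<longrightarrow> p t + p (t + pi) \<noteq> 0"
  shows "\<exists>\<epsilon>>0. \<forall>\<theta> \<psi>. \<bar>\<theta> - x0\<bar> < \<epsilon> \<longrightarrow> \<bar>\<psi> - x0\<bar> < \<epsilon> \<longrightarrow> gam \<theta> = gam (\<psi> + pi) \<longrightarrow> \<theta> = x0"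
proof -
  obtain e1 where e1: "e1 > 0" "\<forall>t. t \<noteq> x0 \<and> \<bar>t - x0\<bar> < e1 \<longrightarrow> radius t \<noteq> 0"
    using radius_zeros_isolated by blast
  obtain e2 where e2: "e2 > 0" "\<forall>t. t \<noteq> x0 + pi \<and> \<bar>t - (x0 + pi)\<bar> < e2 \<longrightarrow> radius t \<noteq> 0"
    using radius_zeros_isolated by blast
  obtain e3 where e3: "e3 > 0" "\<forall>t. t \<noteq> x0 \<and> \<bar>t - x0\<bar> < e3 \<longrightarrow> p t + p (t + pi) \<noteq> 0"
    using assms(2) by blast
  define \<epsilon> where "\<epsilon> = min (min e1 e2) (min e3 (pi / 4))"
  have "\<epsilon> > 0" using e1 e2 e3 by (simp add: \<epsilon>_def)
  have "support_gap (gam x0) t = 0 \<and> support_gap' (gam x0) t = 0" if "t = x0 \<or> t = x0 + pi" for t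
    using that assms(1) gam_eq_iff_double_zero by metis
  then have sums_zero: "p x0 + p (x0 + pi) = 0" "p' x0 + p' (x0 + pi) = 0"
    using support_gap_antipodal[of "gam x0" x0] by simp_all
  show ?thesis
  proof (intro exI[of _ \<epsilon>] conjI \<open>\<epsilon> > 0\<close> allI impI)
    fix \<theta> \<psi> assume near: "\<bar>\<theta> - x0\<bar> < \<epsilon>" "\<bar>\<psi> - x0\<bar> < \<epsilon>" and "gam \<theta> = gam (\<psi> + pi)"
    let ?P = "gam \<theta>"
    show "\<theta> = x0"
    proof (rule double_zeros_of_summands[where f = "support_gap ?P" and f' = "support_gap' ?P"
          and g = "\<lambda>t. support_gap ?P (t + pi)" and g' = "\<lambda>t. support_gap' ?P (t + pi)"
          and r = radius and s = "\<lambda>t. radius (t + pi)" and \<epsilon> = \<epsilon>])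
      show "((\<lambda>t. support_gap ?P (t + pi)) has_real_derivative support_gap' ?P (x + pi)) (at x)"
        "((\<lambda>t. support_gap' ?P (t + pi)) has_real_derivative
            radius (x + pi) - support_gap ?P (x + pi)) (at x)" for x
        by (simp_all only: DERIV_shift[symmetric] support_gap_deriv support_gap'_deriv)
      show "continuous_on UNIV (\<lambda>t. radius (t + pi))"
        by (intro continuous_on_compose2[OF continuous_on_radius] continuous_intros) auto
      show "radius t \<noteq> 0 \<and> radius (t + pi) \<noteq> 0
          \<and> support_gap ?P t + support_gap ?P (t + pi) \<noteq> 0"
        if "t \<noteq> x0" "\<bar>t - x0\<bar> < \<epsilon>" for t
        using that e1 e2 e3 support_gap_antipodal(1) by (auto simp: \<epsilon>_def)
      show "support_gap ?P x0 + support_gap ?P (x0 + pi) = 0"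
        "support_gap' ?P x0 + support_gap' ?P (x0 + pi) = 0"
        using sums_zero support_gap_antipodal by simp_all
      show "support_gap ?P \<theta> = 0" "support_gap' ?P \<theta> = 0"
        using gam_eq_iff_double_zero by blast+
      show "support_gap ?P (\<psi> + pi) = 0" "support_gap' ?P (\<psi> + pi) = 0"
        using gam_eq_iff_double_zero \<open>gam \<theta> = gam (\<psi> + pi)\<close> by metis+
    qed (use near continuous_on_radius support_gap_deriv support_gap'_deriv in \<open>auto simp: \<epsilon>_def\<close>)
  qed
qed

section \<open>Coincidences and preimage counts\<close>

lemma shifted_coincidences:
  assumes shift: "\<And>t. gam (t + c) = gam t"
  shows "\<exists>\<epsilon>>0. \<forall>\<theta> \<phi>. \<bar>\<theta> - x0\<bar> < \<epsilon> \<longrightarrow> \<bar>\<phi> - (x0 + c)\<bar> < \<epsilon> \<longrightarrow> gam \<theta> = gam \<phi> \<longrightarrow> \<phi> = \<theta> + c"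
proof -
  obtain \<epsilon> where "\<epsilon> > 0" and inj: "inj_on gam {x0 - \<epsilon><..<x0 + \<epsilon>}"
    using gam_locally_injective by blast
  have "\<phi> - c = \<theta>" if "\<bar>\<theta> - x0\<bar> < \<epsilon>" "\<bar>\<phi> - (x0 + c)\<bar> < \<epsilon>" "gam \<theta> = gam \<phi>" for \<theta> \<phi>
    using inj_onD[OF inj, of "\<phi> - c" \<theta>] that shift[of "\<phi> - c"] by (auto simp: abs_less_iff)
  then show ?thesis using \<open>\<epsilon> > 0\<close> by force
qed

lemma antipodal_pair_coincidences:
  assumes "gam x0 = gam \<phi>0" "\<bar>\<phi>0 - x0\<bar> = pi"
    and "\<exists>e>0. \<forall>t. t \<noteq> x0 \<and> \<bar>t - x0\<bar> < e \<longrightarrow> p t + p (t + pi) \<noteq> 0"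
  shows "\<exists>\<epsilon>>0. \<forall>\<theta> \<phi>. \<bar>\<theta> - x0\<bar> < \<epsilon> \<longrightarrow> \<bar>\<phi> - \<phi>0\<bar> < \<epsilon> \<longrightarrow> gam \<theta> = gam \<phi> \<longrightarrow> \<theta> = x0"
proof -
  define c where "c = \<phi>0 - x0"
  have "\<bar>c\<bar> = pi" using assms(2) by (simp add: c_def)
  then have "c = pi \<or> c = - pi" by (auto simp: abs_if split: if_splits)
  then have shift: "gam (\<phi> - c + pi) = gam \<phi>" for \<phi>
  proof
    assume "c = - pi"
    then have "\<phi> - c + pi = \<phi> + 2 * pi" by simp
    then show ?thesis by (simp only: gam_periodic)
  qed simp
  have "gam x0 = gam (x0 + pi)"
    using assms(1) shift[of \<phi>0] by (simp add: c_def)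
  from antipodal_coincidence_isolated[OF this assms(3)]
  obtain \<epsilon> where "\<epsilon> > 0" and \<epsilon>: "\<And>\<theta> \<psi>. \<bar>\<theta> - x0\<bar> < \<epsilon> \<Longrightarrow> \<bar>\<psi> - x0\<bar> < \<epsilon>
      \<Longrightarrow> gam \<theta> = gam (\<psi> + pi) \<Longrightarrow> \<theta> = x0"
    by blast
  have "\<theta> = x0" if "\<bar>\<theta> - x0\<bar> < \<epsilon>" "\<bar>\<phi> - \<phi>0\<bar> < \<epsilon>" "gam \<theta> = gam \<phi>" for \<theta> \<phi>
    using \<epsilon>[of \<theta> "\<phi> - c"] that shift[of \<phi>] by (simp add: c_def)
  then show ?thesis using \<open>\<epsilon> > 0\<close> by blast
qed

lemma coincidences_near_pair:
  assumes per: "\<And>t. per \<Longrightarrow> gam (t + pi) = gam t"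
    and nonper: "\<not> per \<Longrightarrow> \<exists>e>0. \<forall>t. t \<noteq> x0 \<and> \<bar>t - x0\<bar> < e \<longrightarrow> p t + p (t + pi) \<noteq> 0"
    and bounds: "x0 \<in> {-pi..pi}" "\<phi>0 \<in> {-pi..pi}"
  obtains \<epsilon> where "\<epsilon> > 0" and "\<And>\<theta> \<phi>. \<bar>\<theta> - x0\<bar> < \<epsilon> \<Longrightarrow> \<bar>\<phi> - \<phi>0\<bar> < \<epsilon> \<Longrightarrow> gam \<theta> = gam \<phi>
      \<Longrightarrow> \<theta> = x0 \<or> (\<phi> - \<theta> \<in> {0, pi, -pi, 2 * pi, -2 * pi} \<and> (\<bar>\<phi> - \<theta>\<bar> = pi \<longrightarrow> per))"
proof -
  define c where "c = \<phi>0 - x0"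
  consider (separated) "gam x0 \<noteq> gam \<phi>0"
    | (transversal) "gam x0 = gam \<phi>0" "sin c \<noteq> 0"
    | (antipodal) "gam x0 = gam \<phi>0" "\<bar>c\<bar> = pi" "\<not> per"
    | (period) "c \<in> {0, pi, -pi, 2 * pi, -2 * pi}" "\<bar>c\<bar> = pi \<longrightarrow> per"
  proof (cases "gam x0 = gam \<phi>0 \<and> sin c = 0")
    case True
    then have "c \<in> {0, pi, -pi, 2 * pi, -2 * pi}"
      using sin_diff_eq_0_cases[OF _ bounds] by (simp add: c_def)
    then show ?thesis using that(3,4) True by (cases "\<bar>c\<bar> = pi \<and> \<not> per") auto
  qed (use that(1,2) in auto)
  then show ?thesis
  proof cases
    case separated
    then obtain \<epsilon> where "\<epsilon> > 0"
      and "\<forall>\<theta> \<phi>. \<bar>\<theta> - x0\<bar> < \<epsilon> \<longrightarrow> \<bar>\<phi> - \<phi>0\<bar> < \<epsilon> \<longrightarrow> gam \<theta> \<noteq> gam \<phi>"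
      using continuous_separates_near[OF continuous_on_gam] by blast
    then show ?thesis by (intro that[of \<epsilon>]) auto
  next
    case transversal
    then obtain \<epsilon> where "\<epsilon> > 0"
      and "\<forall>\<theta> \<phi>. \<bar>\<theta> - x0\<bar> < \<epsilon> \<longrightarrow> \<bar>\<phi> - \<phi>0\<bar> < \<epsilon> \<longrightarrow> gam \<theta> = gam \<phi> \<longrightarrow> \<theta> = x0"
      using transversal_coincidence_isolated[of x0 \<phi>0] by (auto simp: c_def)
    then show ?thesis by (intro that[of \<epsilon>]) auto
  next
    case antipodal
    then obtain \<epsilon> where "\<epsilon> > 0"
      and "\<forall>\<theta> \<phi>. \<bar>\<theta> - x0\<bar> < \<epsilon> \<longrightarrow> \<bar>\<phi> - \<phi>0\<bar> < \<epsilon> \<longrightarrow> gam \<theta> = gam \<phi> \<longrightarrow> \<theta> = x0"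
      using antipodal_pair_coincidences[of x0 \<phi>0] nonper by (auto simp: c_def)
    then show ?thesis by (intro that[of \<epsilon>]) auto
  next
    case period
    have "gam (t + c) = gam t" for t
      using period per gam_periodic[of t] gam_periodic[of "t - 2 * pi"] per[of "t - pi"] by auto
    from shifted_coincidences[OF this, of x0] obtain \<epsilon> where "\<epsilon> > 0"
      and shift: "\<forall>\<theta> \<phi>. \<bar>\<theta> - x0\<bar> < \<epsilon> \<longrightarrow> \<bar>\<phi> - \<phi>0\<bar> < \<epsilon> \<longrightarrow> gam \<theta> = gam \<phi> \<longrightarrow> \<phi> = \<theta> + c"
      by (auto simp: c_def)
    show ?thesis
    proof (rule that[OF \<open>\<epsilon> > 0\<close>])
      fix \<theta> \<phi> assume "\<bar>\<theta> - x0\<bar> < \<epsilon>" "\<bar>\<phi> - \<phi>0\<bar> < \<epsilon>" "gam \<theta> = gam \<phi>"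
      then have "\<phi> - \<theta> = c" using shift[rule_format, of \<theta> \<phi>] by simp
      then show "\<theta> = x0 \<or> (\<phi> - \<theta> \<in> {0, pi, -pi, 2 * pi, -2 * pi} \<and> (\<bar>\<phi> - \<theta>\<bar> = pi \<longrightarrow> per))"
        using period by simp
    qed
  qed
qed

text \<open>When \<open>gam\<close> has period \<open>\<pi>\<close> (flag \<open>per\<close>), the forced partners \<open>\<theta> \<plusminus> \<pi>\<close> do not count.\<close>
definition extra_preimage :: "bool \<Rightarrow> real \<Rightarrow> real \<Rightarrow> bool" where
  "extra_preimage per \<theta> \<phi> \<longleftrightarrow> \<theta> \<in> {-pi<..<pi} \<and> \<phi> \<in> {-pi<..<pi} \<and> gam \<theta> = gam \<phi> \<and> \<phi> \<noteq> \<theta>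
     \<and> (per \<longrightarrow> \<bar>\<phi> - \<theta>\<bar> \<noteq> pi)"

lemma extra_preimages_locally_determined:
  assumes "\<And>t. per \<Longrightarrow> gam (t + pi) = gam t"
    and "\<not> per \<Longrightarrow> \<exists>e>0. \<forall>t. t \<noteq> x0 \<and> \<bar>t - x0\<bar> < e \<longrightarrow> p t + p (t + pi) \<noteq> 0"
    and "x0 \<in> {-pi..pi}" "\<phi>0 \<in> {-pi..pi}"
  shows "\<exists>\<epsilon>>0. \<forall>\<theta> \<phi>. \<bar>\<theta> - x0\<bar> < \<epsilon> \<longrightarrow> \<bar>\<phi> - \<phi>0\<bar> < \<epsilon> \<longrightarrow> extra_preimage per \<theta> \<phi> \<longrightarrow> \<theta> = x0"
proof -
  obtain \<epsilon> where "\<epsilon> > 0" and \<epsilon>: "\<And>\<theta> \<phi>. \<bar>\<theta> - x0\<bar> < \<epsilon> \<Longrightarrow> \<bar>\<phi> - \<phi>0\<bar> < \<epsilon> \<Longrightarrow> gam \<theta> = gam \<phi>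
      \<Longrightarrow> \<theta> = x0 \<or> (\<phi> - \<theta> \<in> {0, pi, -pi, 2 * pi, -2 * pi} \<and> (\<bar>\<phi> - \<theta>\<bar> = pi \<longrightarrow> per))"
    using coincidences_near_pair[OF assms] by blast
  show ?thesis
  proof (intro exI[of _ \<epsilon>] conjI \<open>\<epsilon> > 0\<close> allI impI)
    fix \<theta> \<phi> assume "\<bar>\<theta> - x0\<bar> < \<epsilon>" "\<bar>\<phi> - \<phi>0\<bar> < \<epsilon>" "extra_preimage per \<theta> \<phi>"
    then show "\<theta> = x0" using \<epsilon> by (fastforce simp: extra_preimage_def)
  qed
qed

lemma finite_extra_preimages:
  assumes "\<And>t. per \<Longrightarrow> gam (t + pi) = gam t"
    and "\<And>x0. \<not> per \<Longrightarrow> \<exists>e>0. \<forall>t. t \<noteq> x0 \<and> \<bar>t - x0\<bar> < e \<longrightarrow> p t + p (t + pi) \<noteq> 0"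
  shows "finite {\<theta>. \<exists>\<phi>. extra_preimage per \<theta> \<phi>}"
proof (rule finite_if_locally_determined[OF compact_Times[OF compact_Icc compact_Icc]])
  show "(\<theta>, \<phi>) \<in> {-pi..pi} \<times> {-pi..pi}" if "extra_preimage per \<theta> \<phi>" for \<theta> \<phi>
    using that by (auto simp: extra_preimage_def)
next
  fix z :: "real \<times> real" assume "z \<in> {-pi..pi} \<times> {-pi..pi}"
  then show "\<exists>\<epsilon>>0. \<forall>\<theta> \<phi>. \<bar>\<theta> - fst z\<bar> < \<epsilon> \<longrightarrow> \<bar>\<phi> - snd z\<bar> < \<epsilon>
      \<longrightarrow> extra_preimage per \<theta> \<phi> \<longrightarrow> \<theta> = fst z"
    by (intro extra_preimages_locally_determined assms) (auto simp: mem_Times_iff)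
qed

lemma ratpar_preimages_card_1:
  assumes "finite {\<theta>. \<exists>\<phi>. extra_preimage False \<theta> \<phi>}"
  shows "\<forall>\<^sub>F t in cofinite. card {s. gam (2 * arctan s) = gam (2 * arctan t)} = 1"
proof -
  let ?E = "(\<lambda>t. 2 * arctan t) -` {\<theta>. \<exists>\<phi>. extra_preimage False \<theta> \<phi>}"
  have preimages: "{s. gam (2 * arctan s) = gam (2 * arctan t)} = {t}" if "t \<notin> ?E" for t
  proof -
    have "s = t" if "gam (2 * arctan s) = gam (2 * arctan t)" for s
    proof -
      have "\<not> extra_preimage False (2 * arctan t) (2 * arctan s)" using \<open>t \<notin> ?E\<close> by simp
      then have "2 * arctan s = 2 * arctan t"
        using that[symmetric] two_arctan_bounds[of s] two_arctan_bounds[of t]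
        by (simp add: extra_preimage_def)
      then show ?thesis by (simp add: arctan_eq_iff)
    qed
    then show ?thesis by auto
  qed
  have "{t. card {s. gam (2 * arctan s) = gam (2 * arctan t)} \<noteq> 1} \<subseteq> ?E"
  proof
    fix t assume "t \<in> {t. card {s. gam (2 * arctan s) = gam (2 * arctan t)} \<noteq> 1}"
    then show "t \<in> ?E" using preimages[of t] by (cases "t \<in> ?E") simp_all
  qed
  moreover have "finite ?E" by (rule finite_vimageI[OF assms inj_two_arctan])
  ultimately show ?thesis unfolding eventually_cofinite by (rule finite_subset)
qed

lemma ratpar_preimages_card_2:
  assumes "finite {\<theta>. \<exists>\<phi>. extra_preimage True \<theta> \<phi>}" and per: "\<And>t. gam (t + pi) = gam t"
  shows "\<forall>\<^sub>F t in cofinite. card {s. gam (2 * arctan s) = gam (2 * arctan t)} = 2"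
proof -
  let ?E = "(\<lambda>t. 2 * arctan t) -` {\<theta>. \<exists>\<phi>. extra_preimage True \<theta> \<phi>}"
  have preimages: "{s. gam (2 * arctan s) = gam (2 * arctan t)} = {t, - 1 / t}"
    if "t \<noteq> 0" "t \<notin> ?E" for t
  proof -
    have "gam (2 * arctan (- 1 / t)) = gam (2 * arctan t)"
      using two_arctan_neg_inverse[OF \<open>t \<noteq> 0\<close>] per[of "2 * arctan t - pi"] per[of "2 * arctan t"]
      by (auto simp: sgn_if)
    moreover have "s = t \<or> s = - 1 / t" if "gam (2 * arctan s) = gam (2 * arctan t)" for s
    proof -
      have "\<not> extra_preimage True (2 * arctan t) (2 * arctan s)" using \<open>t \<notin> ?E\<close> by simp
      then have "2 * arctan s = 2 * arctan t \<or> \<bar>2 * arctan s - 2 * arctan t\<bar> = pi"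
        using that[symmetric] two_arctan_bounds[of s] two_arctan_bounds[of t]
        by (auto simp: extra_preimage_def)
      then show ?thesis using two_arctan_antipodal_iff[of s t] by (auto simp: arctan_eq_iff)
    qed
    ultimately show ?thesis by auto
  qed
  have "t \<noteq> - 1 / t" if "t \<noteq> 0" for t :: real
  proof
    assume "t = - 1 / t"
    then have "t * t = - 1" using that by (simp add: field_simps)
    then show False using zero_le_square[of t] by linarith
  qed
  then have "{t. card {s. gam (2 * arctan s) = gam (2 * arctan t)} \<noteq> 2} \<subseteq> insert 0 ?E"
    using preimages by force
  moreover have "finite (insert 0 ?E)" using finite_vimageI[OF assms(1) inj_two_arctan] by simp
  ultimately show ?thesis unfolding eventually_cofinite by (rule finite_subset)
qed

lemma gam_pi_periodic:
  assumes "\<forall>k. 2 * k \<le> N \<longrightarrow> a (2 * k) = 0 \<and> (1 \<le> k \<longrightarrow> b (2 * k) = 0)"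
  shows "gam (t + pi) = gam t"
proof -
  have "a k = 0" if "k \<le> N" "even k" for k
    using assms that by (auto elim!: evenE)
  moreover have "b k = 0" if "0 < k" "k \<le> N" "even k" for k
    using assms that by (auto elim!: evenE)
  moreover have "real k * b k = 0" if "k \<le> N" "even k" for k
    using calculation(2)[of k] that by (cases "k = 0") auto
  ultimately have "p (t + pi) = - p t" "p' (t + pi) = - p' t"
    unfolding p'_def by (auto intro!: trig_poly_antiperiodic)
  then show ?thesis by (simp add: gam_def gx_def gy_def)
qed

end

theorem lemma2p3:
  fixes a b :: "nat \<Rightarrow> real" and N :: nat
  assumes "N \<ge> 2"
    and "a N \<noteq> 0 \<or> b N \<noteq> 0"
  shows "(((\<exists>k. 2 * k \<le> N \<and> a (2 * k) \<noteq> 0) \<or> (\<exists>k. 2 \<le> 2 * k \<and> 2 * k \<le> N \<and> b (2 * k) \<noteq> 0))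
           \<longrightarrow> (\<forall>\<^sub>F t in cofinite.
                 card {s. ratpar (trig_poly a b N) s = ratpar (trig_poly a b N) t} = 1))
         \<and> ((\<forall>k. 2 * k \<le> N \<longrightarrow> a (2 * k) = 0 \<and> (1 \<le> k \<longrightarrow> b (2 * k) = 0))
           \<longrightarrow> (\<forall>\<^sub>F t in cofinite.
                 card {s. ratpar (trig_poly a b N) s = ratpar (trig_poly a b N) t} = 2))"
proof -
  interpret hedgehog a b N using assms by unfold_locales
  have ratpar_eq: "ratpar (trig_poly a b N) = (\<lambda>s. gam (2 * arctan s))"
    by (rule ext) (simp add: ratpar_def gamma_curve_eq)
  show ?thesis
    unfolding ratpar_eq
  proof (intro conjI impI)
    assume "(\<exists>k. 2 * k \<le> N \<and> a (2 * k) \<noteq> 0) \<or> (\<exists>k. 2 \<le> 2 * k \<and> 2 * k \<le> N \<and> b (2 * k) \<noteq> 0)"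
    from trig_poly_plus_shift_pi_zeros_isolated[OF this]
    have "finite {\<theta>. \<exists>\<phi>. extra_preimage False \<theta> \<phi>}"
      by (intro finite_extra_preimages) blast+
    then show "\<forall>\<^sub>F t in cofinite. card {s. gam (2 * arctan s) = gam (2 * arctan t)} = 1"
      by (rule ratpar_preimages_card_1)
  next
    assume "\<forall>k. 2 * k \<le> N \<longrightarrow> a (2 * k) = 0 \<and> (1 \<le> k \<longrightarrow> b (2 * k) = 0)"
    then have periodic: "gam (t + pi) = gam t" for t by (rule gam_pi_periodic)
    then have "finite {\<theta>. \<exists>\<phi>. extra_preimage True \<theta> \<phi>}"
      by (intro finite_extra_preimages) blast+
    then show "\<forall>\<^sub>F t in cofinite. card {s. gam (2 * arctan s) = gam (2 * arctan t)} = 2"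
      using periodic by (rule ratpar_preimages_card_2)
  qed
qed

end
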